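(* Let $q$ be a prime power, $m,s\ge1$, $n=n_1+\dots+n_\ell$ with all $n_i>0$, and let $\mathcal{C}\subseteq\mathbb{F}_{q^m}^n$ be an $\mathbb{F}_{q^m}$-linear code of dimension $k$ and minimum sum-rank distance $d$ (w.r.t. the partition $(n_1,\dots,n_\ell)$), with parity-check matrix $\mathbf{H}=(\mathbf{H}^{(1)}\mid\dots\mid\mathbf{H}^{(\ell)})\in\mathbb{F}_{q^m}^{(n-k)\times n}$, $\mathbf{H}^{(i)}\in\mathbb{F}_{q^m}^{(n-k)\times n_i}$. Let $\mathbf{E}=(\mathbf{E}^{(1)}\mid\dots\mid\mathbf{E}^{(\ell)})\in\mathbb{F}_{q^m}^{s\times n}$ with $\mathbf{E}^{(i)}\in\mathbb{F}_{q^m}^{s\times n_i}$, $\operatorname{rk}_q(\mathbf{E}^{(i)})=t_i$, and sum-rank weight $t=\sum_it_i\le d-2$. Let $\mathbf{S}=\mathbf{H}\mathbf{E}^\top$, let $\mathbf{P}\in\mathbb{F}_{q^m}^{(n-k)\times(n-k)}$ be invertible with $\mathbf{P}\mathbf{S}$ in row-echelon form, and let $\mathbf{H}_{\mathrm{sub}}=(\mathbf{H}_{\mathrm{sub}}^{(1)}\mid\dots\mid\mathbf{H}_{\mathrm{sub}}^{(\ell)})$ be the submatrix of $\mathbf{P}\mathbf{H}$ formed by the rows corresponding to the zero rows of $\mathbf{P}\mathbf{S}$ (with $\mathbf{H}_{\mathrm{sub}}^{(i)}$ having $n_i$ columns). If $s\ge t$ and $\operatorname{rk}_{q^m}(\mathbf{E})=t$,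 then for all $i\in[1:\ell]$, $$\mathcal{R}_q(\mathbf{E}^{(i)})=\ker_r\big(\operatorname{ext}(\mathbf{H}_{\mathrm{sub}}^{(i)})\big)_q .$$
   Context: Fix an ordered basis $\mathbf{b}$ of $\mathbb{F}_{q^m}$ over $\mathbb{F}_q$; $\operatorname{ext}(\alpha)\in\mathbb{F}_q^m$ is the coordinate column vector of $\alpha\in\mathbb{F}_{q^m}$ w.r.t. $\mathbf{b}$, applied entrywise to matrices (an $a\times b$ matrix over $\mathbb{F}_{q^m}$ becomes an $am\times b$ matrix over $\mathbb{F}_q$). $\operatorname{rk}_q(\mathbf{X}):=\operatorname{rk}(\operatorname{ext}(\mathbf{X}))$ over $\mathbb{F}_q$; $\operatorname{rk}_{q^m}$ is the rank over $\mathbb{F}_{q^m}$. The sum-rank weight of $\mathbf{x}=(\mathbf{x}^{(1)}\mid\dots\mid\mathbf{x}^{(\ell)})$ is $\sum_i\operatorname{rk}_q(\mathbf{x}^{(i)})$, the sum-rank distance is the weight of the difference, and $d$ is the minimum sum-rank distance between distinct codewords. $\mathcal{R}_q(\mathbf{X})$ denotes the $\mathbb{F}_q$-row space of $\operatorname{ext}(\mathbf{X})$. For a matrix $\mathbf{M}$ over $\mathbb{F}_q$ with $N$ columns, $\ker_r(\mathbf{M})_q=\{\mathbf{v}\in\mathbb{F}_q^N:\mathbf{M}\mathbf{v}^\top=\mathbf{0}\}$. *)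

theory Defs
  imports "Jordan_Normal_Form.DL_Rank" "Jordan_Normal_Form.Matrix_Kernel"
    "HOL-Library.Extended_Nat"
begin

(* F_q is the finite field type 'q, F_{q^m} is the finite field type 'Q.
   phi :: 'q => 'Q is a field embedding (ring homomorphism),
   b :: 'Q vec (of dimension m) is an ordered basis of 'Q over phi('q). *)

definition is_embedding :: "('q::field \<Rightarrow> 'Q::field) \<Rightarrow> bool" where
  "is_embedding phi \<longleftrightarrow> phi 1 = 1 \<and> (\<forall>a c. phi (a + c) = phi a + phi c)
      \<and> (\<forall>a c. phi (a * c) = phi a * phi c)"

definition lin_comb :: "('q::field \<Rightarrow> 'Q::field) \<Rightarrow> 'Q vec \<Rightarrow> 'q vec \<Rightarrow> 'Q" where
  "lin_comb phi b c = (\<Sum>j<dim_vec b. phi (c $ j) * b $ j)"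

definition is_basis :: "('q::field \<Rightarrow> 'Q::field) \<Rightarrow> 'Q vec \<Rightarrow> bool" where
  "is_basis phi b \<longleftrightarrow>
     (\<forall>\<alpha>. \<exists>!c. c \<in> carrier_vec (dim_vec b) \<and> lin_comb phi b c = \<alpha>)"

definition ext_el :: "('q::field \<Rightarrow> 'Q::field) \<Rightarrow> 'Q vec \<Rightarrow> 'Q \<Rightarrow> 'q vec" where
  "ext_el phi b \<alpha> = (THE c. c \<in> carrier_vec (dim_vec b) \<and> lin_comb phi b c = \<alpha>)"

(* entrywise extension: an a x c matrix over F_{q^m} becomes an (a*m) x c matrix over F_q;
   entry (i,j) becomes the column ext(X_{ij}) occupying rows i*m .. i*m+m-1 *)
definition ext_mat :: "('q::field \<Rightarrow> 'Q::field) \<Rightarrow> 'Q vec \<Rightarrow> 'Q mat \<Rightarrow> 'q mat" where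
  "ext_mat phi b X = mat (dim_row X * dim_vec b) (dim_col X)
     (\<lambda>(r, j). ext_el phi b (X $$ (r div dim_vec b, j)) $ (r mod dim_vec b))"

definition rk_q :: "('q::field \<Rightarrow> 'Q::field) \<Rightarrow> 'Q vec \<Rightarrow> 'Q mat \<Rightarrow> nat" where
  "rk_q phi b X = vec_space.rank (dim_row (ext_mat phi b X)) (ext_mat phi b X)"

definition rk :: "'a::field mat \<Rightarrow> nat" where
  "rk X = vec_space.rank (dim_row X) X"

definition row_space_q :: "('q::field \<Rightarrow> 'Q::field) \<Rightarrow> 'Q vec \<Rightarrow> 'Q mat \<Rightarrow> 'q vec set" where
  "row_space_q phi b X = vec_space.row_space (dim_col X) (ext_mat phi b X)"

(* column offset of block i for the partition ns = [n_1,...,n_l] (blocks indexed from 0) *)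
definition blk_off :: "nat list \<Rightarrow> nat \<Rightarrow> nat" where
  "blk_off ns i = sum_list (take i ns)"

definition blk :: "nat list \<Rightarrow> 'a mat \<Rightarrow> nat \<Rightarrow> 'a mat" where
  "blk ns X i = mat (dim_row X) (ns ! i) (\<lambda>(r, j). X $$ (r, blk_off ns i + j))"

definition sr_weight :: "('q::field \<Rightarrow> 'Q::field) \<Rightarrow> 'Q vec \<Rightarrow> nat list \<Rightarrow> 'Q mat \<Rightarrow> nat" where
  "sr_weight phi b ns X = (\<Sum>i<length ns. rk_q phi b (blk ns X i))"

definition sr_dist :: "('q::field \<Rightarrow> 'Q::field) \<Rightarrow> 'Q vec \<Rightarrow> nat list \<Rightarrow> 'Q vec \<Rightarrow> 'Q vec \<Rightarrow> nat" where
  "sr_dist phi b ns x y = sr_weight phi b ns (mat_of_row (x - y))"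

(* minimum sum-rank distance of a code C (infinity if C has fewer than two codewords) *)
definition sr_min_dist :: "('q::field \<Rightarrow> 'Q::field) \<Rightarrow> 'Q vec \<Rightarrow> nat list \<Rightarrow> 'Q vec set \<Rightarrow> enat" where
  "sr_min_dist phi b ns C = (INF xy \<in> {(x, y). x \<in> C \<and> y \<in> C \<and> x \<noteq> y}.
       enat (sr_dist phi b ns (fst xy) (snd xy)))"

definition leading :: "'a::zero mat \<Rightarrow> nat \<Rightarrow> nat" where
  "leading A i = (LEAST j. j < dim_col A \<and> A $$ (i, j) \<noteq> 0)"

definition is_ref :: "'a::zero mat \<Rightarrow> bool" where
  "is_ref A \<longleftrightarrow> (\<exists>r \<le> dim_row A.
     (\<forall>i < r. \<exists>j < dim_col A. A $$ (i, j) \<noteq> 0) \<and>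
     (\<forall>i. r \<le> i \<and> i < dim_row A \<longrightarrow> (\<forall>j < dim_col A. A $$ (i, j) = 0)) \<and>
     (\<forall>i. Suc i < r \<longrightarrow> leading A i < leading A (Suc i)))"

definition zero_rows :: "'a::zero mat \<Rightarrow> nat set" where
  "zero_rows A = {i. i < dim_row A \<and> (\<forall>j < dim_col A. A $$ (i, j) = 0)}"

definition rows_sub :: "'a mat \<Rightarrow> nat set \<Rightarrow> 'a mat" where
  "rows_sub M I = mat (card I) (dim_col M) (\<lambda>(r, j). M $$ (sorted_list_of_set I ! r, j))"

end

theory Submission
  imports Defs
begin

(* Let R_i be the F_q-row space of ext(E^(i)). The rows of H_sub are the combinations of parity
   checks that annihilate E^T (the zero rows of the echelon form of H E^T), so w lies in the
   kernel of ext(H_sub^(i)) iff w, placed in block i, is congruent modulo the code ker H to a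
   combination E^T z of the rows of E.
   If w is in R_i: every row block of E^(j) lies in the F_(q^m)-span of an F_q-basis of R_j, so the
   row space of E lies in a space of dimension at most t_1 + ... + t_l = t = rk E; the two spaces
   therefore coincide and contain w placed in block i.
   Conversely, if c = (w placed in block i) - E^T z is a codeword, its j-th block has rank at most
   t_j, plus one in block i, so its sum-rank weight is at most t + 1 < d and c = 0. Hence w is an
   F_(q^m)-combination of the rows of E^(i), and reading off one coordinate l with ext(1)_l nonzero
   puts w into R_i. *)

lemma mult_unit_vec_eq_col:
  fixes A :: "'a::comm_ring_1 mat"
  assumes "A \<in> carrier_mat n nc" "i < nc"
  shows "A *\<^sub>v unit_vec nc i = col A i"
  using assms by (intro eq_vecI) (auto simp: scalar_prod_def if_distrib sum.delta' cong: if_cong)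

lemma mult_zero_vec_right [simp]:
  fixes A :: "'a::comm_ring_1 mat"
  assumes "A \<in> carrier_mat n nc"
  shows "A *\<^sub>v 0\<^sub>v nc = 0\<^sub>v n"
  using assms by (intro eq_vecI) (auto simp: scalar_prod_def)

lemma mult_mat_vec_uminus_right:
  fixes A :: "'a::comm_ring_1 mat"
  assumes "A \<in> carrier_mat n nc" "z \<in> carrier_vec nc"
  shows "A *\<^sub>v (- z) = - (A *\<^sub>v z)"
  using assms by (intro eq_vecI) (auto simp: scalar_prod_def sum_negf)

lemma wide_mat_kernel_nontrivial:
  fixes A :: "'a::field mat"
  assumes A: "A \<in> carrier_mat nr nc" and wide: "nr < nc"
  shows "\<exists>v \<in> carrier_vec nc. v \<noteq> 0\<^sub>v nc \<and> A *\<^sub>v v = 0\<^sub>v nr"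
proof (rule ccontr)
  assume trivial: "\<not> ?thesis"
  interpret V: vec_space "TYPE('a)" nr .
  have distinct: "distinct (cols A)"
  proof (rule ccontr)
    assume "\<not> distinct (cols A)"
    then obtain i j where ij: "i < nc" "j < nc" "i \<noteq> j" "col A i = col A j"
      using A by (auto simp: distinct_conv_nth)
    have "A *\<^sub>v (unit_vec nc i - unit_vec nc j) = 0\<^sub>v nr"
      using A ij by (simp add: mult_minus_distrib_mat_vec mult_unit_vec_eq_col)
    moreover have "(unit_vec nc i - unit_vec nc j) $ i = (1::'a)" using ij by simp
    ultimately show False using trivial by (metis index_zero_vec(1) one_neq_zero minus_carrier_vec unit_vec_carrier ij(1))
  qed
  have "V.lin_indpt (set (cols A))"
    using V.lin_depE[OF A _ distinct] trivial by blast
  moreover have "set (cols A) \<subseteq> carrier_vec nr" using A by (auto simp: cols_def)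
  ultimately have "card (set (cols A)) \<le> V.dim"
    using V.li_le_dim(2) V.fin_dim by blast
  moreover have "card (set (cols A)) = nc" using distinct A by (simp add: distinct_card)
  ultimately show False using wide V.dim_is_n by simp
qed

definition indep_cols :: "'a::field mat \<Rightarrow> bool" where
  "indep_cols B \<longleftrightarrow> (\<forall>x \<in> carrier_vec (dim_col B). B *\<^sub>v x = 0\<^sub>v (dim_row B) \<longrightarrow> x = 0\<^sub>v (dim_col B))"

lemma mat_factor_colwise:
  fixes C :: "'a::comm_ring_1 mat"
  assumes M: "M \<in> carrier_mat n k" and C: "C \<in> carrier_mat n c"
    and cols: "\<And>j. j < k \<Longrightarrow> \<exists>x \<in> carrier_vec c. col M j = C *\<^sub>v x"
  shows "\<exists>Y \<in> carrier_mat c k. M = C * Y"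
proof -
  obtain x where x: "\<And>j. j < k \<Longrightarrow> x j \<in> carrier_vec c \<and> col M j = C *\<^sub>v x j"
    using cols by metis
  define Y where "Y = mat c k (\<lambda>(i, j). x j $ i)"
  have Y: "Y \<in> carrier_mat c k" unfolding Y_def by simp
  have col_Y: "col Y j = x j" if "j < k" for j
    using x[OF that] that unfolding Y_def by (intro eq_vecI) auto
  have "M $$ (i, j) = (C * Y) $$ (i, j)" if "i < n" "j < k" for i j
  proof -
    have "M $$ (i, j) = col M j $ i" using M that by simp
    also have "\<dots> = (C *\<^sub>v x j) $ i" using x[OF that(2)] by simp
    also have "\<dots> = (C * Y) $$ (i, j)" using col_Y[OF that(2)] C Y that by simp
    finally show ?thesis .
  qed
  then have "M = C * Y"
    using M C Y by (intro eq_matI) auto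
  with Y show ?thesis by blast
qed

lemma (in vec_space) maximal_lin_indpt_span:
  assumes T: "T \<subseteq> carrier_vec n" and max: "maximal S (\<lambda>S. S \<subseteq> T \<and> lin_indpt S)"
  shows "T \<subseteq> span S"
proof
  fix v assume v: "v \<in> T"
  have S_T: "S \<subseteq> T" and S_li: "lin_indpt S" using max unfolding maximal_def by auto
  show "v \<in> span S"
  proof (cases "v \<in> S")
    case True
    then show ?thesis using span_mem S_T T by blast
  next
    case False
    have "\<not> (insert v S \<subseteq> T \<and> lin_indpt (insert v S))"
    proof
      assume "insert v S \<subseteq> T \<and> lin_indpt (insert v S)"
      with max have "insert v S = S" unfolding maximal_def by blast
      with False show False by auto
    qed
    then have "lin_dep (insert v S)" using v S_T by auto
    then show ?thesis using lin_dep_iff_in_span[of S v] S_T T S_li v False by auto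
  qed
qed

text \<open>Column-rank factorization: B consists of a maximal independent set of columns of A.\<close>

lemma rank_factorization:
  fixes A :: "'a::field mat"
  assumes A: "A \<in> carrier_mat n nc"
  defines "r \<equiv> vec_space.rank n A"
  shows "\<exists>B X S. B \<in> carrier_mat n r \<and> X \<in> carrier_mat r nc \<and> S \<in> carrier_mat nc r
     \<and> A = B * X \<and> B = A * S \<and> indep_cols B"
proof -
  interpret V: vec_space "TYPE('a)" n .
  let ?P = "\<lambda>T. T \<subseteq> set (cols A) \<and> V.lin_indpt T"
  have "?P {}"
    by (metis empty_subsetI V.fin_dim V.finite_basis_exists V.subset_li_is_li vec_vs vectorspace.basis_def)
  then obtain S where fin: "finite S" and max: "maximal S ?P"
    using maximal_exists_superset[of "set (cols A)" ?P "{}"] by blast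
  have S_cols: "S \<subseteq> set (cols A)" and S_li: "V.lin_indpt S" using max unfolding maximal_def by auto
  obtain L where L: "set L = S" "distinct L" using finite_distinct_list[OF fin] by blast
  have len: "length L = r"
    using L V.rank_card_indpt[OF A max] distinct_card unfolding r_def by fastforce
  have cols_carrier: "set (cols A) \<subseteq> carrier_vec n" using A by (auto simp: cols_def)
  define B where "B = mat_of_cols n L"
  have B: "B \<in> carrier_mat n r" unfolding B_def using len by (metis mat_of_cols_carrier(1))
  have cols_B: "cols B = L" unfolding B_def using L S_cols cols_carrier by simp
  have "indep_cols B"
    unfolding indep_cols_def
  proof (intro ballI impI, rule ccontr)
    fix x assume "x \<in> carrier_vec (dim_col B)" "B *\<^sub>v x = 0\<^sub>v (dim_row B)" "x \<noteq> 0\<^sub>v (dim_col B)"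
    then have "V.lin_dep (set (cols B))"
      using B cols_B L by (intro V.lin_depI[OF B]) auto
    then show False using S_li cols_B L by simp
  qed
  have span_S: "V.span S = {y \<in> carrier_vec n. \<exists>x \<in> carrier_vec r. B *\<^sub>v x = y}"
    using V.col_space_eq[OF B] B cols_B L unfolding V.col_space_def by auto
  have cols_span: "set (cols A) \<subseteq> V.span S" by (rule V.maximal_lin_indpt_span[OF cols_carrier max])
  have "\<exists>X \<in> carrier_mat r nc. A = B * X"
  proof (intro mat_factor_colwise[OF A B])
    fix j assume "j < nc"
    then have "col A j \<in> V.span S" using A cols_span by (auto simp: cols_def)
    then obtain x where "x \<in> carrier_vec r" "B *\<^sub>v x = col A j" using span_S by auto
    then show "\<exists>x \<in> carrier_vec r. col A j = B *\<^sub>v x" by metis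
  qed
  moreover have "\<exists>S' \<in> carrier_mat nc r. B = A * S'"
  proof (rule mat_factor_colwise[OF B A])
    fix j assume "j < r"
    then have "col B j \<in> set (cols B)" using B by (simp add: cols_def)
    then have "col B j \<in> set (cols A)" using cols_B L S_cols by auto
    then obtain i where "i < nc" "col B j = col A i" using A by (auto simp: cols_def)
    then show "\<exists>x \<in> carrier_vec nc. col B j = A *\<^sub>v x"
      using A by (intro bexI[of _ "unit_vec nc i"]) (auto simp: mult_unit_vec_eq_col)
  qed
  ultimately show ?thesis using B \<open>indep_cols B\<close> by blast
qed

lemma rank_le_inner_dim:
  fixes A :: "'a::field mat"
  assumes A: "A \<in> carrier_mat n nc" and C: "C \<in> carrier_mat n c" and Y: "Y \<in> carrier_mat c nc"
    and factor: "A = C * Y"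
  shows "vec_space.rank n A \<le> c"
proof (rule ccontr)
  let ?r = "vec_space.rank n A"
  assume "\<not> ?r \<le> c"
  obtain B X S where BXS: "B \<in> carrier_mat n ?r" "X \<in> carrier_mat ?r nc" "S \<in> carrier_mat nc ?r"
     "B = A * S" "indep_cols B"
    using rank_factorization[OF A] by blast
  have YS: "Y * S \<in> carrier_mat c ?r" using Y BXS by auto
  obtain x where x: "x \<in> carrier_vec ?r" "x \<noteq> 0\<^sub>v ?r" "(Y * S) *\<^sub>v x = 0\<^sub>v c"
    using wide_mat_kernel_nontrivial[OF YS] \<open>\<not> ?r \<le> c\<close> by auto
  have "B *\<^sub>v x = C *\<^sub>v ((Y * S) *\<^sub>v x)"
    using BXS C Y x factor by (simp add: assoc_mult_mat assoc_mult_mat_vec[of _ n c _ ?r])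
  also have "\<dots> = 0\<^sub>v n" using x C by simp
  finally show False using BXS x unfolding indep_cols_def by auto
qed

lemma rank_mult_left_le:
  fixes A G :: "'a::field mat"
  assumes A: "A \<in> carrier_mat n k" and G: "G \<in> carrier_mat k nc"
  shows "vec_space.rank n (A * G) \<le> vec_space.rank k G"
proof -
  obtain B X where "B \<in> carrier_mat k (vec_space.rank k G)" "X \<in> carrier_mat (vec_space.rank k G) nc" "G = B * X"
    using rank_factorization[OF G] by blast
  then show ?thesis
    using A by (intro rank_le_inner_dim[of _ n nc "A * B" _ X]) (auto simp: assoc_mult_mat)
qed

lemma rank_transpose:
  fixes A :: "'a::field mat"
  assumes A: "A \<in> carrier_mat n nc"
  shows "vec_space.rank nc A\<^sup>T = vec_space.rank n A"
proof -
  have le: "vec_space.rank nc A\<^sup>T \<le> vec_space.rank n A" if A: "A \<in> carrier_mat n nc" for A :: "'a mat" and n nc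
  proof -
    obtain B X where "B \<in> carrier_mat n (vec_space.rank n A)" "X \<in> carrier_mat (vec_space.rank n A) nc" "A = B * X"
      using rank_factorization[OF A] by blast
    then show ?thesis
      using A by (intro rank_le_inner_dim[of _ nc n "X\<^sup>T" _ "B\<^sup>T"]) (auto simp: transpose_mult)
  qed
  show ?thesis using le[OF A] le[of "A\<^sup>T" nc n] A by simp
qed

lemma rank_eq_inner_dim_imp_factor:
  fixes M :: "'a::field mat"
  assumes M: "M \<in> carrier_mat n s" and D: "D \<in> carrier_mat n t" and Y: "Y \<in> carrier_mat t s"
    and factor: "M = D * Y" and rank: "vec_space.rank n M = t"
  shows "\<exists>Z \<in> carrier_mat s t. D = M * Z"
proof -
  obtain B S where B: "B \<in> carrier_mat n t" and S: "S \<in> carrier_mat s t"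
    and BMS: "B = M * S" and indep: "indep_cols B"
    using rank_factorization[OF M] unfolding rank by blast
  define K where "K = Y * S"
  have K: "K \<in> carrier_mat t t" unfolding K_def using Y S by simp
  have BK: "B = D * K" unfolding K_def BMS factor using D Y S by (simp add: assoc_mult_mat)
  have "det K \<noteq> 0"
  proof
    assume "det K = 0"
    then obtain v where v: "v \<in> carrier_vec t" "v \<noteq> 0\<^sub>v t" "K *\<^sub>v v = 0\<^sub>v t"
      using det_0_iff_vec_prod_zero_field[OF K] by blast
    then have "B *\<^sub>v v = 0\<^sub>v n" unfolding BK using D K by (simp add: assoc_mult_mat_vec)
    then show False using B indep v unfolding indep_cols_def by auto
  qed
  then obtain V where V: "V \<in> carrier_mat t t" "K * V = 1\<^sub>m t"
    using det_non_zero_imp_unit[OF K, of "()"] unfolding Units_def ring_mat_def by auto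
  have "D = D * (K * V)" using V D by simp
  also have "\<dots> = M * (S * V)" unfolding BMS assoc_mult_mat[OF D K V(1), symmetric] BK[symmetric]
    using M S V by (simp add: assoc_mult_mat)
  finally show ?thesis using S V by (intro bexI[of _ "S * V"]) auto
qed

lemma invertible_mat_mult_vec_eq_0:
  fixes P :: "'a::field mat"
  assumes P: "P \<in> carrier_mat N N" and inv: "invertible_mat P" and y: "y \<in> carrier_vec N"
    and Py: "P *\<^sub>v y = 0\<^sub>v N"
  shows "y = 0\<^sub>v N"
proof -
  obtain Q where QP: "Q * P = 1\<^sub>m (dim_row Q)" and PQ: "P * Q = 1\<^sub>m (dim_row P)"
    using inv unfolding invertible_mat_def inverts_mat_def by auto
  have "dim_row Q = dim_col P" "dim_col Q = dim_row P"
    using arg_cong[OF QP, of dim_col] arg_cong[OF PQ, of dim_col] by simp_all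
  then have Q: "Q \<in> carrier_mat N N" using P by auto
  have "y = (Q * P) *\<^sub>v y" using QP Q y by simp
  also have "\<dots> = 0\<^sub>v N" using Q P y Py by (simp add: assoc_mult_mat_vec)
  finally show ?thesis .
qed

lemma upper_triangular_solvable:
  fixes K :: "'a::field mat"
  assumes K: "K \<in> carrier_mat r r" and ut: "upper_triangular K" and diag: "\<forall>i < r. K $$ (i, i) \<noteq> 0"
    and y: "y \<in> carrier_vec r"
  shows "\<exists>u \<in> carrier_vec r. K *\<^sub>v u = y"
proof -
  have "det K = prod_list (diag_mat K)" by (rule det_upper_triangular[OF ut K])
  also have "\<dots> \<noteq> 0" unfolding prod_list_diag_prod using K diag by auto
  finally obtain V where V: "V \<in> carrier_mat r r" "K * V = 1\<^sub>m r"
    using det_non_zero_imp_unit[OF K, of "()"] unfolding Units_def ring_mat_def by auto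
  have "K *\<^sub>v (V *\<^sub>v y) = y" using K V y by (simp flip: assoc_mult_mat_vec)
  then show ?thesis using V y by (intro bexI[of _ "V *\<^sub>v y"]) auto
qed

lemma leading_nonzero:
  assumes "\<exists>j < dim_col A. A $$ (i, j) \<noteq> 0"
  shows "leading A i < dim_col A" "A $$ (i, leading A i) \<noteq> 0"
    and "\<And>c. c < leading A i \<Longrightarrow> A $$ (i, c) = 0"
proof -
  have ex: "\<exists>j. j < dim_col A \<and> A $$ (i, j) \<noteq> 0" using assms by blast
  show "leading A i < dim_col A" "A $$ (i, leading A i) \<noteq> 0"
    using LeastI_ex[OF ex] unfolding leading_def by auto
  fix c assume c: "c < leading A i"
  then have "c < dim_col A" using LeastI_ex[OF ex] unfolding leading_def by auto
  then show "A $$ (i, c) = 0"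
    using not_less_Least[of c "\<lambda>j. j < dim_col A \<and> A $$ (i, j) \<noteq> 0"] c unfolding leading_def by auto
qed

lemma ref_pivots:
  assumes A: "A \<in> carrier_mat N s" and ref: "is_ref A"
  obtains r ld where "r \<le> N" and "\<And>i. r \<le> i \<Longrightarrow> i < N \<Longrightarrow> i \<in> zero_rows A"
    and "\<And>i. i < r \<Longrightarrow> ld i < s" and "\<And>i. i < r \<Longrightarrow> A $$ (i, ld i) \<noteq> 0"
    and "\<And>i c. i < r \<Longrightarrow> c < ld i \<Longrightarrow> A $$ (i, c) = 0"
    and "\<And>i i'. i < i' \<Longrightarrow> i' < r \<Longrightarrow> ld i < ld i'"
proof -
  obtain r where r: "r \<le> N" and nonzero: "\<forall>i < r. \<exists>j < s. A $$ (i, j) \<noteq> 0"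
    and zero: "\<forall>i. r \<le> i \<and> i < N \<longrightarrow> (\<forall>j < s. A $$ (i, j) = 0)"
    and incr: "\<forall>i. Suc i < r \<longrightarrow> leading A i < leading A (Suc i)"
    using ref A unfolding is_ref_def by auto
  have "i \<in> zero_rows A" if "r \<le> i" "i < N" for i using zero that A unfolding zero_rows_def by auto
  moreover have "leading A i < s" "A $$ (i, leading A i) \<noteq> 0" "\<And>c. c < leading A i \<Longrightarrow> A $$ (i, c) = 0"
    if "i < r" for i
    using leading_nonzero[of A i] nonzero that A by auto
  moreover have "leading A i < leading A i'" if "i < i'" "i' < r" for i i'
    using lift_Suc_mono_less_ivl[of "{..<r - 1}" "leading A" i i'] incr that by force
  ultimately show thesis using that r by blast
qed

text \<open>The pivot columns of a row-echelon matrix with r nonzero rows form an invertible upper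
  triangular r \<times> r block, so every right-hand side vanishing on the zero rows is attained.\<close>

lemma ref_solvable:
  fixes A :: "'a::field mat"
  assumes A: "A \<in> carrier_mat N s" and ref: "is_ref A" and y: "y \<in> carrier_vec N"
    and y_zero: "\<forall>i \<in> zero_rows A. y $ i = 0"
  shows "\<exists>x \<in> carrier_vec s. A *\<^sub>v x = y"
proof -
  obtain r ld where "r \<le> N" and zero: "\<And>i. r \<le> i \<Longrightarrow> i < N \<Longrightarrow> i \<in> zero_rows A"
    and ld: "\<And>i. i < r \<Longrightarrow> ld i < s" "\<And>i. i < r \<Longrightarrow> A $$ (i, ld i) \<noteq> 0"
      "\<And>i c. i < r \<Longrightarrow> c < ld i \<Longrightarrow> A $$ (i, c) = 0"
    and ld_mono: "\<And>i i'. i < i' \<Longrightarrow> i' < r \<Longrightarrow> ld i < ld i'"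
    using ref_pivots[OF A ref] by blast
  define K where "K = mat r r (\<lambda>(a, c). A $$ (a, ld c))"
  have K: "K \<in> carrier_mat r r" unfolding K_def by simp
  have ut: "upper_triangular K"
    unfolding upper_triangular_def K_def using ld(3) ld_mono by auto
  have diag: "\<forall>i < r. K $$ (i, i) \<noteq> 0" using ld(2) by (simp add: K_def)
  obtain u where u: "u \<in> carrier_vec r" and Ku: "K *\<^sub>v u = vec r (\<lambda>a. y $ a)"
    using upper_triangular_solvable[OF K ut diag, of "vec r (\<lambda>a. y $ a)"] by auto
  define Sel :: "'a mat" where "Sel = mat s r (\<lambda>(c, a). if c = ld a then 1 else 0)"
  have Sel: "Sel \<in> carrier_mat s r" unfolding Sel_def by simp
  have ASel: "(A * Sel) $$ (i, a) = A $$ (i, ld a)" if "i < N" "a < r" for i a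
    using A that ld(1)[OF that(2)]
    by (simp add: Sel_def scalar_prod_def if_distrib sum.delta' cong: if_cong)
  have row_sum: "((A * Sel) *\<^sub>v u) $ i = (\<Sum>a<r. A $$ (i, ld a) * u $ a)" if i: "i < N" for i
  proof -
    have "((A * Sel) *\<^sub>v u) $ i = (\<Sum>a<r. (A * Sel) $$ (i, a) * u $ a)"
      using A Sel u i by (simp add: scalar_prod_def lessThan_atLeast0 del: assoc_mult_mat_vec)
    also have "\<dots> = (\<Sum>a<r. A $$ (i, ld a) * u $ a)"
      using ASel i by (intro sum.cong) auto
    finally show ?thesis .
  qed
  have "(A * Sel) *\<^sub>v u = y"
  proof (rule eq_vecI)
    fix i assume "i < dim_vec y"
    then have i: "i < N" using y by simp
    show "((A * Sel) *\<^sub>v u) $ i = y $ i"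
    proof (cases "i < r")
      case True
      have "(K *\<^sub>v u) $ i = (\<Sum>a<r. A $$ (i, ld a) * u $ a)"
        using K u True unfolding K_def by (simp add: scalar_prod_def lessThan_atLeast0)
      then show ?thesis using row_sum[OF i] Ku True by simp
    next
      case False
      then have "i \<in> zero_rows A" using zero i by simp
      moreover have "A $$ (i, ld a) = 0" if "a < r" for a
        using \<open>i \<in> zero_rows A\<close> ld(1)[OF that] A unfolding zero_rows_def by simp
      ultimately show ?thesis using row_sum[OF i] y_zero by simp
    qed
  qed (use A Sel y in auto)
  then show ?thesis using A Sel u by (intro bexI[of _ "Sel *\<^sub>v u"]) (auto simp: assoc_mult_mat_vec)
qed

lemma zero_rows_mult_vec:
  assumes "A \<in> carrier_mat N s" "i \<in> zero_rows A" "z \<in> carrier_vec s"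
  shows "(A *\<^sub>v z) $ i = 0"
  using assms unfolding zero_rows_def by (auto simp: scalar_prod_def intro!: sum.neutral)

lemma rows_sub_mult_vec_eq_0_iff:
  assumes A: "A \<in> carrier_mat N n" and I: "I \<subseteq> {..<N}" and v: "v \<in> carrier_vec n"
  shows "rows_sub A I *\<^sub>v v = 0\<^sub>v (card I) \<longleftrightarrow> (\<forall>i \<in> I. (A *\<^sub>v v) $ i = 0)"
proof -
  let ?l = "sorted_list_of_set I"
  have fin: "finite I" using I finite_subset by blast
  have len: "length ?l = card I" by simp
  have entry: "(rows_sub A I *\<^sub>v v) $ r = (A *\<^sub>v v) $ (?l ! r)" if "r < card I" for r
  proof -
    have "?l ! r \<in> I" using that fin nth_mem[of r ?l] by simp
    then show ?thesis using that A I v by (auto simp: rows_sub_def scalar_prod_def)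
  qed
  have "(\<forall>r < card I. (A *\<^sub>v v) $ (?l ! r) = 0) \<longleftrightarrow> (\<forall>i \<in> I. (A *\<^sub>v v) $ i = 0)"
    using fin by (metis in_set_conv_nth len set_sorted_list_of_set)
  moreover have "rows_sub A I *\<^sub>v v = 0\<^sub>v (card I) \<longleftrightarrow> (\<forall>r < card I. (rows_sub A I *\<^sub>v v) $ r = 0)"
    by (auto simp: rows_sub_def vec_eq_iff)
  ultimately show ?thesis using entry by auto
qed

text \<open>On its nonzero rows the row-echelon matrix P H B is onto (ref_solvable), so only the zero
  rows constrain x; invertibility of P then passes from P H to H.\<close>

lemma rows_sub_zero_rows_kernel_iff:
  fixes H B P :: "'a::field mat"
  assumes H: "H \<in> carrier_mat N n" and B: "B \<in> carrier_mat n s"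
    and P: "P \<in> carrier_mat N N" and inv: "invertible_mat P" and ref: "is_ref (P * (H * B))"
    and x: "x \<in> carrier_vec n"
  shows "rows_sub (P * H) (zero_rows (P * (H * B))) *\<^sub>v x = 0\<^sub>v (card (zero_rows (P * (H * B))))
    \<longleftrightarrow> (\<exists>z \<in> carrier_vec s. H *\<^sub>v (x - B *\<^sub>v z) = 0\<^sub>v N)"
proof -
  let ?A = "P * (H * B)" and ?Z = "zero_rows (P * (H * B))"
  have A: "?A \<in> carrier_mat N s" using P H B by simp
  have Z: "?Z \<subseteq> {..<N}" using A unfolding zero_rows_def by auto
  have P_diff: "P *\<^sub>v (H *\<^sub>v (x - B *\<^sub>v z)) = (P * H) *\<^sub>v x - ?A *\<^sub>v z" if "z \<in> carrier_vec s" for z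
    using P H B x that by (simp add: mult_minus_distrib_mat_vec assoc_mult_mat_vec[OF P mult_carrier_mat[OF H B]])
  show ?thesis
    unfolding rows_sub_mult_vec_eq_0_iff[OF mult_carrier_mat[OF P H] Z x]
  proof
    assume "\<forall>i \<in> ?Z. (P * H *\<^sub>v x) $ i = 0"
    then obtain z where z: "z \<in> carrier_vec s" "?A *\<^sub>v z = (P * H) *\<^sub>v x"
      using ref_solvable[OF A ref, of "(P * H) *\<^sub>v x"] P H x by auto
    then have "P *\<^sub>v (H *\<^sub>v (x - B *\<^sub>v z)) = 0\<^sub>v N"
      using P_diff P H x by simp
    then have "H *\<^sub>v (x - B *\<^sub>v z) = 0\<^sub>v N"
      using invertible_mat_mult_vec_eq_0[OF P inv] H B x z by simp
    then show "\<exists>z \<in> carrier_vec s. H *\<^sub>v (x - B *\<^sub>v z) = 0\<^sub>v N" using z by blast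
  next
    assume "\<exists>z \<in> carrier_vec s. H *\<^sub>v (x - B *\<^sub>v z) = 0\<^sub>v N"
    then obtain z where z: "z \<in> carrier_vec s" "H *\<^sub>v (x - B *\<^sub>v z) = 0\<^sub>v N" by blast
    then have diff: "(P * H) *\<^sub>v x - ?A *\<^sub>v z = 0\<^sub>v N"
      using P_diff[OF z(1)] P by simp
    show "\<forall>i \<in> ?Z. (P * H *\<^sub>v x) $ i = 0"
    proof
      fix i assume i: "i \<in> ?Z"
      then have "i < N" using Z by auto
      then have "(P * H *\<^sub>v x) $ i - (?A *\<^sub>v z) $ i = 0"
        using arg_cong[OF diff, of "\<lambda>v. v $ i"] P H B by (simp del: assoc_mult_mat_vec)
      then show "(P * H *\<^sub>v x) $ i = 0" using zero_rows_mult_vec[OF A i z(1)] by simp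
    qed
  qed
qed

lemma blk_off_Suc: "j < length ns \<Longrightarrow> blk_off ns (Suc j) = blk_off ns j + ns ! j"
  unfolding blk_off_def by (simp add: take_Suc_conv_app_nth)

lemma blk_off_mono: "j \<le> j' \<Longrightarrow> blk_off ns j \<le> blk_off ns j'"
  unfolding blk_off_def by (metis le_Suc_ex sum_list_append take_add le_add1)

lemma blk_off_add_le: "j < length ns \<Longrightarrow> blk_off ns j + ns ! j \<le> sum_list ns"
  using blk_off_Suc[of j ns] blk_off_mono[of "Suc j" "length ns" ns] by (simp add: blk_off_def)

definition blk_vec :: "nat list \<Rightarrow> nat \<Rightarrow> 'a vec \<Rightarrow> 'a vec" where
  "blk_vec ns j v = vec (ns ! j) (\<lambda>x. v $ (blk_off ns j + x))"

definition blk_embed :: "nat list \<Rightarrow> nat \<Rightarrow> 'a::zero vec \<Rightarrow> 'a vec" where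
  "blk_embed ns j x = vec (sum_list ns) (\<lambda>c.
     if blk_off ns j \<le> c \<and> c < blk_off ns j + ns ! j then x $ (c - blk_off ns j) else 0)"

definition blk_embed_mat :: "nat list \<Rightarrow> nat \<Rightarrow> 'a::zero mat \<Rightarrow> 'a mat" where
  "blk_embed_mat ns j M = mat (sum_list ns) (dim_col M) (\<lambda>(c, a).
     if blk_off ns j \<le> c \<and> c < blk_off ns j + ns ! j then M $$ (c - blk_off ns j, a) else 0)"

lemma blk_vec_carrier [simp]: "blk_vec ns j v \<in> carrier_vec (ns ! j)"
  unfolding blk_vec_def by simp

lemma blk_embed_carrier [simp]: "blk_embed ns j x \<in> carrier_vec (sum_list ns)"
  unfolding blk_embed_def by simp

lemma sum_blk:
  assumes j: "j < length ns"
  shows "(\<Sum>c<sum_list ns. if blk_off ns j \<le> c \<and> c < blk_off ns j + ns ! j then f (c - blk_off ns j) else 0)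
     = (\<Sum>x<ns ! j. (f x :: 'a::comm_monoid_add))"
proof -
  let ?o = "blk_off ns j"
  have "(\<Sum>c<sum_list ns. if ?o \<le> c \<and> c < ?o + ns ! j then f (c - ?o) else 0)
      = (\<Sum>c \<in> {..<sum_list ns} \<inter> {?o..<?o + ns ! j}. f (c - ?o))"
    by (simp add: sum.inter_restrict atLeastLessThan_iff)
  also have "{..<sum_list ns} \<inter> {?o..<?o + ns ! j} = {?o..<?o + ns ! j}"
    using blk_off_add_le[OF j] by auto
  also have "(\<Sum>c \<in> {?o..<?o + ns ! j}. f (c - ?o)) = (\<Sum>x<ns ! j. f x)"
    by (rule sum.reindex_bij_witness[of _ "\<lambda>x. x + ?o" "\<lambda>c. c - ?o"]) auto
  finally show ?thesis .
qed

lemma mult_blk_embed: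
  fixes M :: "'a::comm_ring_1 mat"
  assumes M: "M \<in> carrier_mat a (sum_list ns)" and j: "j < length ns" and x: "x \<in> carrier_vec (ns ! j)"
  shows "M *\<^sub>v blk_embed ns j x = blk ns M j *\<^sub>v x"
proof (rule eq_vecI)
  fix i assume "i < dim_vec (blk ns M j *\<^sub>v x)"
  then have i: "i < a" using M unfolding blk_def by simp
  have "(M *\<^sub>v blk_embed ns j x) $ i = (\<Sum>c<sum_list ns. if blk_off ns j \<le> c \<and> c < blk_off ns j + ns ! j
      then M $$ (i, blk_off ns j + (c - blk_off ns j)) * x $ (c - blk_off ns j) else 0)"
    using M i by (auto simp: scalar_prod_def lessThan_atLeast0 blk_embed_def intro!: sum.cong)
  also have "\<dots> = (\<Sum>y<ns ! j. M $$ (i, blk_off ns j + y) * x $ y)"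
    by (rule sum_blk[OF j])
  also have "\<dots> = (blk ns M j *\<^sub>v x) $ i"
    using M i x by (simp add: blk_def scalar_prod_def lessThan_atLeast0)
  finally show "(M *\<^sub>v blk_embed ns j x) $ i = (blk ns M j *\<^sub>v x) $ i" .
qed (use M in \<open>auto simp: blk_def\<close>)

lemma blk_embed_mat_mult:
  fixes M :: "'a::comm_ring_1 mat"
  assumes "M \<in> carrier_mat (ns ! j) k" and "w \<in> carrier_vec k"
  shows "blk_embed_mat ns j M *\<^sub>v w = blk_embed ns j (M *\<^sub>v w)"
  using assms by (intro eq_vecI) (auto simp: blk_embed_mat_def blk_embed_def scalar_prod_def)

lemma blk_vec_add:
  assumes "u \<in> carrier_vec (sum_list ns)" "v \<in> carrier_vec (sum_list ns)" "j < length ns"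
  shows "blk_vec ns j (u + v) = blk_vec ns j u + blk_vec ns j v"
  using assms blk_off_add_le[of j ns] by (intro eq_vecI) (auto simp: blk_vec_def)

lemma blk_vec_transpose_mult:
  fixes M :: "'a::comm_ring_1 mat"
  assumes M: "M \<in> carrier_mat s (sum_list ns)" and j: "j < length ns" and z: "z \<in> carrier_vec s"
  shows "blk_vec ns j (M\<^sup>T *\<^sub>v z) = (blk ns M j)\<^sup>T *\<^sub>v z"
  using assms blk_off_add_le[OF j] by (intro eq_vecI) (auto simp: blk_vec_def blk_def scalar_prod_def)

lemma blk_vec_row:
  assumes "E \<in> carrier_mat s (sum_list ns)" "j < length ns" "r < s"
  shows "blk_vec ns j (row E r) = row (blk ns E j) r"
  using assms blk_off_add_le[of j ns] by (intro eq_vecI) (auto simp: blk_vec_def blk_def)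

lemma blk_mat_of_row:
  assumes "c \<in> carrier_vec (sum_list ns)" "j < length ns"
  shows "blk ns (mat_of_row c) j = mat_of_row (blk_vec ns j c)"
  using assms blk_off_add_le[of j ns] by (intro eq_matI) (auto simp: blk_vec_def blk_def mat_of_row_def)

lemma blk_vec_blk_embed:
  assumes j: "j < length ns" and j': "j' < length ns" and x: "x \<in> carrier_vec (ns ! j)"
  shows "blk_vec ns j' (blk_embed ns j x) = (if j' = j then x else 0\<^sub>v (ns ! j'))"
proof (rule eq_vecI)
  fix y assume "y < dim_vec (if j' = j then x else 0\<^sub>v (ns ! j'))"
  then have y: "y < ns ! j'" using x by (auto split: if_splits)
  have inside: "blk_off ns j' + y < sum_list ns" using blk_off_add_le[OF j'] y by simp
  have "blk_off ns j \<le> blk_off ns j' + y \<and> blk_off ns j' + y < blk_off ns j + ns ! j \<longleftrightarrow> j' = j"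
  proof (cases j j' rule: linorder_cases)
    case less
    then show ?thesis using blk_off_mono[of "Suc j" j' ns] blk_off_Suc[OF j] by auto
  next
    case greater
    then show ?thesis using blk_off_mono[of "Suc j'" j ns] blk_off_Suc[OF j'] y by auto
  qed (use y in auto)
  then show "blk_vec ns j' (blk_embed ns j x) $ y = (if j' = j then x else 0\<^sub>v (ns ! j')) $ y"
    using inside y by (auto simp: blk_vec_def blk_embed_def)
qed (use x in auto)

lemma blk_vec_induct:
  fixes e :: "'a::comm_monoid_add vec"
  assumes e: "e \<in> carrier_vec (sum_list ns)"
    and zero: "P (0\<^sub>v (sum_list ns))"
    and add: "\<And>u v. u \<in> carrier_vec (sum_list ns) \<Longrightarrow> v \<in> carrier_vec (sum_list ns) \<Longrightarrow> P u \<Longrightarrow> P v \<Longrightarrow> P (u + v)"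
    and blk: "\<And>j. j < length ns \<Longrightarrow> P (blk_embed ns j (blk_vec ns j e))"
  shows "P e"
proof -
  define prefix where "prefix J = vec (sum_list ns) (\<lambda>c. if c < blk_off ns J then e $ c else 0)" for J
  have "P (prefix J)" if "J \<le> length ns" for J
    using that
  proof (induction J)
    case 0
    have "prefix 0 = 0\<^sub>v (sum_list ns)" unfolding prefix_def blk_off_def by (intro eq_vecI) auto
    then show ?case using zero by simp
  next
    case (Suc J)
    then have J: "J < length ns" by simp
    have "prefix (Suc J) = prefix J + blk_embed ns J (blk_vec ns J e)"
      unfolding prefix_def using blk_off_Suc[OF J] blk_off_add_le[OF J]
      by (intro eq_vecI) (auto simp: blk_embed_def blk_vec_def)
    then show ?case using Suc add[of "prefix J"] blk[OF J] by (simp add: prefix_def)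
  qed
  moreover have "prefix (length ns) = e" unfolding prefix_def blk_off_def using e by (intro eq_vecI) auto
  ultimately show ?thesis by (metis order_refl)
qed

lemma (in vec_space) mult_vec_in_span:
  assumes A: "A \<in> carrier_mat n k" and v: "v \<in> carrier_vec k"
    and S: "set (cols A) \<subseteq> S" "S \<subseteq> carrier_vec n"
  shows "A *\<^sub>v v \<in> span S"
proof -
  have "A *\<^sub>v v \<in> span (set (cols A))"
    using col_space_eq[OF A] A v unfolding col_space_def by auto
  then show ?thesis using span_is_monotone[OF S(1)] by blast
qed

lemma blk_diag_mat_exists:
  assumes D: "\<And>j. j < length ns \<Longrightarrow> D j \<in> carrier_mat (ns ! j) (r j)"
  shows "\<exists>DL. DL \<in> carrier_mat (sum_list ns) (\<Sum>j<length ns. r j)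
    \<and> (\<forall>j < length ns. set (cols (blk_embed_mat ns j (D j))) \<subseteq> set (cols DL))"
proof -
  define L where "L = concat (map (\<lambda>j. cols (blk_embed_mat ns j (D j))) [0..<length ns])"
  have L: "set L \<subseteq> carrier_vec (sum_list ns)" unfolding L_def by (auto simp: cols_def blk_embed_mat_def)
  have "length L = (\<Sum>j\<leftarrow>[0..<length ns]. dim_col (blk_embed_mat ns j (D j)))"
    unfolding L_def by (simp add: length_concat o_def)
  also have "\<dots> = (\<Sum>j\<leftarrow>[0..<length ns]. r j)"
    using D by (intro arg_cong[where f = sum_list] map_cong) (auto simp: blk_embed_mat_def)
  finally have "length L = (\<Sum>j<length ns. r j)" by (simp add: sum_list_distinct_conv_sum_set lessThan_atLeast0)
  then have "mat_of_cols (sum_list ns) L \<in> carrier_mat (sum_list ns) (\<Sum>j<length ns. r j)"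
    by (metis mat_of_cols_carrier(1))
  moreover have "cols (mat_of_cols (sum_list ns) L) = L" using L by simp
  moreover have "\<forall>j < length ns. set (cols (blk_embed_mat ns j (D j))) \<subseteq> set L" unfolding L_def by auto
  ultimately show ?thesis by (intro exI[of _ "mat_of_cols (sum_list ns) L"]) auto
qed

lemma blk_diag_factor:
  fixes E :: "'a::field mat" and D W :: "nat \<Rightarrow> 'a mat" and r :: "nat \<Rightarrow> nat"
  assumes E: "E \<in> carrier_mat s (sum_list ns)"
    and D: "\<And>j. j < length ns \<Longrightarrow> D j \<in> carrier_mat (ns ! j) (r j)"
    and W: "\<And>j. j < length ns \<Longrightarrow> W j \<in> carrier_mat (r j) s"
    and factor: "\<And>j. j < length ns \<Longrightarrow> (blk ns E j)\<^sup>T = D j * W j"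
  defines "t \<equiv> \<Sum>j<length ns. r j"
  shows "\<exists>DL Y. DL \<in> carrier_mat (sum_list ns) t \<and> Y \<in> carrier_mat t s \<and> E\<^sup>T = DL * Y
    \<and> (\<forall>j < length ns. \<forall>u \<in> carrier_vec (r j). \<exists>x \<in> carrier_vec t. DL *\<^sub>v x = blk_embed ns j (D j *\<^sub>v u))"
proof -
  let ?n = "sum_list ns"
  interpret V: vec_space "TYPE('a)" ?n .
  obtain DL where DL: "DL \<in> carrier_mat ?n t"
    and blk_cols: "\<And>j. j < length ns \<Longrightarrow> set (cols (blk_embed_mat ns j (D j))) \<subseteq> set (cols DL)"
    using blk_diag_mat_exists[OF D] unfolding t_def by blast
  let ?L = "set (cols DL)"
  have L: "?L \<subseteq> carrier_vec ?n" using cols_dim[of DL] carrier_matD(1)[OF DL] by simp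
  have span_L: "V.span ?L = {y \<in> carrier_vec ?n. \<exists>x \<in> carrier_vec t. DL *\<^sub>v x = y}"
    using V.col_space_eq[OF DL] DL unfolding V.col_space_def by simp
  have blk_in_span: "blk_embed ns j (D j *\<^sub>v u) \<in> V.span ?L"
    if j: "j < length ns" and u: "u \<in> carrier_vec (r j)" for j u
  proof -
    have "blk_embed_mat ns j (D j) \<in> carrier_mat ?n (r j)"
      using D[OF j] by (simp add: blk_embed_mat_def)
    then have "blk_embed_mat ns j (D j) *\<^sub>v u \<in> V.span ?L"
      using V.mult_vec_in_span[OF _ u blk_cols[OF j] L] by blast
    then show ?thesis using D[OF j] u by (simp add: blk_embed_mat_mult)
  qed
  have rows_in_span: "row E r0 \<in> V.span ?L" if r0: "r0 < s" for r0
  proof (rule blk_vec_induct[where P = "\<lambda>v. v \<in> V.span ?L"])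
    show "row E r0 \<in> carrier_vec ?n" using E r0 by simp
    show "0\<^sub>v ?n \<in> V.span ?L"
      unfolding span_L using DL by (intro CollectI conjI bexI[of _ "0\<^sub>v t"]) auto
    show "u + v \<in> V.span ?L" if "u \<in> V.span ?L" "v \<in> V.span ?L" for u v
      using V.span_add1[OF L that] by simp
    fix j assume j: "j < length ns"
    have "blk_vec ns j (row E r0) = col ((blk ns E j)\<^sup>T) r0"
      using E j r0 by (simp add: blk_vec_row blk_def)
    also have "\<dots> = D j *\<^sub>v col (W j) r0" unfolding factor[OF j] by (rule col_mult2[OF D[OF j] W[OF j] r0])
    finally show "blk_embed ns j (blk_vec ns j (row E r0)) \<in> V.span ?L"
      using blk_in_span[OF j] W[OF j] r0 by simp
  qed
  have "\<exists>Y \<in> carrier_mat t s. E\<^sup>T = DL * Y"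
  proof (rule mat_factor_colwise[OF _ DL])
    fix r0 assume r0: "r0 < s"
    then obtain x where "x \<in> carrier_vec t" "DL *\<^sub>v x = row E r0" using rows_in_span span_L by blast
    then show "\<exists>x \<in> carrier_vec t. col E\<^sup>T r0 = DL *\<^sub>v x" using E r0 by (intro bexI[of _ x]) auto
  qed (use E in simp)
  moreover have "\<forall>j < length ns. \<forall>u \<in> carrier_vec (r j). \<exists>x \<in> carrier_vec t. DL *\<^sub>v x = blk_embed ns j (D j *\<^sub>v u)"
    using blk_in_span span_L by blast
  ultimately show ?thesis using DL by blast
qed

text \<open>Counting dimensions: the row space of E lies in the sum of the block-embedded column spaces
  of the D_j, whose total dimension is at most rk E, so the two spaces coincide.\<close>

lemma blk_factors_in_row_space:
  fixes E :: "'a::field mat" and D W :: "nat \<Rightarrow> 'a mat" and r :: "nat \<Rightarrow> nat"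
  assumes E: "E \<in> carrier_mat s (sum_list ns)"
    and rank: "rk E = (\<Sum>j<length ns. r j)"
    and D: "\<And>j. j < length ns \<Longrightarrow> D j \<in> carrier_mat (ns ! j) (r j)"
    and W: "\<And>j. j < length ns \<Longrightarrow> W j \<in> carrier_mat (r j) s"
    and factor: "\<And>j. j < length ns \<Longrightarrow> (blk ns E j)\<^sup>T = D j * W j"
    and i: "i < length ns" and v: "v \<in> carrier_vec (r i)"
  shows "\<exists>z \<in> carrier_vec s. blk_embed ns i (D i *\<^sub>v v) = E\<^sup>T *\<^sub>v z"
proof -
  let ?t = "\<Sum>j<length ns. r j"
  obtain DL Y where DL: "DL \<in> carrier_mat (sum_list ns) ?t" and Y: "Y \<in> carrier_mat ?t s"
    and ET: "E\<^sup>T = DL * Y"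
    and blk: "\<forall>j < length ns. \<forall>u \<in> carrier_vec (r j). \<exists>x \<in> carrier_vec ?t. DL *\<^sub>v x = blk_embed ns j (D j *\<^sub>v u)"
    using blk_diag_factor[OF E D W factor] by blast
  have "vec_space.rank (sum_list ns) E\<^sup>T = ?t" using rank_transpose[OF E] rank E unfolding rk_def by simp
  then obtain Z where Z: "Z \<in> carrier_mat s ?t" "DL = E\<^sup>T * Z"
    using rank_eq_inner_dim_imp_factor[OF _ DL Y ET] E by auto
  obtain x where x: "x \<in> carrier_vec ?t" "DL *\<^sub>v x = blk_embed ns i (D i *\<^sub>v v)"
    using blk i v by blast
  then show ?thesis using Z E by (intro bexI[of _ "Z *\<^sub>v x"]) auto
qed

lemma sr_min_dist_le_sr_weight:
  assumes "c \<in> C" "0\<^sub>v (dim_vec c) \<in> C" "c \<noteq> 0\<^sub>v (dim_vec c)"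
  shows "sr_min_dist phi b ns C \<le> enat (sr_weight phi b ns (mat_of_row c))"
proof -
  have "sr_min_dist phi b ns C \<le> enat (sr_dist phi b ns c (0\<^sub>v (dim_vec c)))"
    unfolding sr_min_dist_def by (rule INF_lower2[of "(c, 0\<^sub>v (dim_vec c))"]) (use assms in auto)
  then show ?thesis unfolding sr_dist_def by simp
qed

lemma sum_lessThan_mult_split:
  fixes g :: "nat \<Rightarrow> 'a::comm_monoid_add"
  shows "(\<Sum>p<s * m. g p) = (\<Sum>r<s. \<Sum>l<m. g (r * m + l))"
proof (induction s)
  case (Suc s)
  have "(\<Sum>p<Suc s * m. g p) = (\<Sum>p<s * m. g p) + (\<Sum>p\<in>{s * m..<s * m + m}. g p)"
    by (simp add: lessThan_atLeast0 sum.atLeastLessThan_concat add.commute)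
  also have "(\<Sum>p\<in>{s * m..<s * m + m}. g p) = (\<Sum>l<m. g (s * m + l))"
    by (rule sum.reindex_bij_witness[of _ "\<lambda>l. s * m + l" "\<lambda>p. p - s * m"]) auto
  finally show ?case using Suc by simp
qed simp

lemma mult_add_div_mod: "(l::nat) < m \<Longrightarrow> (i * m + l) div m = i \<and> (i * m + l) mod m = l"
  by simp

locale ext_basis =
  fixes phi :: "'q::field \<Rightarrow> 'Q::field" and b :: "'Q vec"
  assumes emb: "is_embedding phi" and basis: "is_basis phi b"
begin

abbreviation m :: nat where "m \<equiv> dim_vec b"

lemma phi_add: "phi (x + y) = phi x + phi y" and phi_mult: "phi (x * y) = phi x * phi y"
  and phi_one: "phi 1 = 1"
  using emb unfolding is_embedding_def by auto

lemma phi_zero: "phi 0 = 0"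
proof -
  have "phi 0 + phi 0 = phi 0 + 0" using phi_add[of 0 0] by simp
  then show ?thesis by (rule add_left_imp_eq)
qed

sublocale field_hom phi
  by unfold_locales (auto simp: phi_add phi_mult phi_one phi_zero)

lemma ext_el_spec: "ext_el phi b \<alpha> \<in> carrier_vec m \<and> lin_comb phi b (ext_el phi b \<alpha>) = \<alpha>"
proof -
  have "\<exists>!c. c \<in> carrier_vec m \<and> lin_comb phi b c = \<alpha>" using basis unfolding is_basis_def by blast
  then show ?thesis unfolding ext_el_def by (rule theI')
qed

lemma ext_el_carrier [simp]: "ext_el phi b \<alpha> \<in> carrier_vec m"
  and ext_el_lin_comb: "lin_comb phi b (ext_el phi b \<alpha>) = \<alpha>"
  using ext_el_spec by blast+

lemma dim_ext_el [simp]: "dim_vec (ext_el phi b \<alpha>) = m"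
  using ext_el_carrier carrier_vecD by blast

lemma ext_el_unique:
  assumes "c \<in> carrier_vec m" "lin_comb phi b c = \<alpha>"
  shows "ext_el phi b \<alpha> = c"
proof -
  have "\<exists>!c. c \<in> carrier_vec m \<and> lin_comb phi b c = \<alpha>" using basis unfolding is_basis_def by blast
  then show ?thesis using assms ext_el_spec by blast
qed

lemma dim_basis_pos: "0 < m"
proof (rule ccontr)
  assume "\<not> 0 < m"
  then have "lin_comb phi b c = 0" for c unfolding lin_comb_def by simp
  then show False using ext_el_lin_comb[of 1] by simp
qed

lemma lin_comb_add:
  assumes "c \<in> carrier_vec m" "d \<in> carrier_vec m"
  shows "lin_comb phi b (c + d) = lin_comb phi b c + lin_comb phi b d"
  using assms unfolding lin_comb_def by (simp add: phi_add distrib_right sum.distrib)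

lemma lin_comb_smult:
  assumes "c \<in> carrier_vec m"
  shows "lin_comb phi b (a \<cdot>\<^sub>v c) = phi a * lin_comb phi b c"
  using assms unfolding lin_comb_def by (simp add: phi_mult sum_distrib_left mult.assoc)

lemma ext_el_add: "ext_el phi b (x + y) = ext_el phi b x + ext_el phi b y"
  by (rule ext_el_unique) (auto simp: lin_comb_add ext_el_lin_comb)

lemma ext_el_smult: "ext_el phi b (phi a * x) = a \<cdot>\<^sub>v ext_el phi b x"
  by (rule ext_el_unique) (auto simp: lin_comb_smult ext_el_lin_comb)

lemma ext_el_zero: "ext_el phi b 0 = 0\<^sub>v m"
  by (rule ext_el_unique) (auto simp: lin_comb_def phi_zero)

lemma ext_el_eq_0_imp: "ext_el phi b x = 0\<^sub>v m \<Longrightarrow> x = 0"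
  using ext_el_lin_comb[of x] by (simp add: lin_comb_def phi_zero)

lemma ext_el_sum_nth:
  assumes "finite I" "l < m"
  shows "ext_el phi b (\<Sum>i\<in>I. f i) $ l = (\<Sum>i\<in>I. ext_el phi b (f i) $ l)"
  using assms(1) by (induction rule: finite_induct) (auto simp: ext_el_zero ext_el_add assms(2))

lemma ext_el_smult_nth: "l < m \<Longrightarrow> ext_el phi b (phi a * x) $ l = a * ext_el phi b x $ l"
  by (simp add: ext_el_smult)

lemma ext_el_phi_nth: "l < m \<Longrightarrow> ext_el phi b (phi a) $ l = a * ext_el phi b 1 $ l"
  using ext_el_smult_nth[of l a 1] by simp

lemma ext_el_mult_nth:
  assumes l: "l < m"
  shows "ext_el phi b (z * x) $ l = (\<Sum>l'<m. ext_el phi b (z * b $ l') $ l * ext_el phi b x $ l')"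
proof -
  have "x = (\<Sum>l'<m. phi (ext_el phi b x $ l') * b $ l')"
    using ext_el_lin_comb[of x] unfolding lin_comb_def by simp
  then have "z * x = (\<Sum>l'<m. phi (ext_el phi b x $ l') * (z * b $ l'))"
    by (metis (no_types, lifting) mult.left_commute sum.cong sum_distrib_left)
  then have "ext_el phi b (z * x) $ l = (\<Sum>l'<m. ext_el phi b (phi (ext_el phi b x $ l') * (z * b $ l')) $ l)"
    using ext_el_sum_nth[OF finite_lessThan l] by simp
  also have "\<dots> = (\<Sum>l'<m. ext_el phi b (z * b $ l') $ l * ext_el phi b x $ l')"
    by (rule sum.cong[OF refl], subst ext_el_smult_nth[OF l], simp add: mult.commute)
  finally show ?thesis .
qed

lemma ext_el_one_nonzero: "\<exists>l < m. ext_el phi b 1 $ l \<noteq> 0"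
proof (rule ccontr)
  assume "\<not> ?thesis"
  then have "ext_el phi b 1 = 0\<^sub>v m" by (intro eq_vecI) auto
  then show False using ext_el_eq_0_imp[of 1] by simp
qed

lemma dim_row_ext_mat [simp]: "dim_row (ext_mat phi b A) = dim_row A * m"
  and dim_col_ext_mat [simp]: "dim_col (ext_mat phi b A) = dim_col A"
  unfolding ext_mat_def by simp_all

lemma ext_mat_of_row_index:
  assumes "l < m" "x < dim_vec v"
  shows "ext_mat phi b (mat_of_row v) $$ (l, x) = ext_el phi b (v $ x) $ l"
  using assms by (simp add: ext_mat_def mat_of_row_def)

lemma ext_mat_mult_vec_nth:
  assumes A: "A \<in> carrier_mat a c" and w: "w \<in> carrier_vec c" and p: "p < a * m"
  shows "(ext_mat phi b A *\<^sub>v w) $ p = ext_el phi b ((A *\<^sub>v map_vec phi w) $ (p div m)) $ (p mod m)"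
proof -
  have p_div: "p div m < a" using p by (simp add: less_mult_imp_div_less)
  have p_mod: "p mod m < m" using dim_basis_pos by simp
  have "(ext_mat phi b A *\<^sub>v w) $ p = (\<Sum>j<c. ext_el phi b (A $$ (p div m, j)) $ (p mod m) * w $ j)"
    using A w p unfolding ext_mat_def by (auto simp: scalar_prod_def lessThan_atLeast0)
  also have "\<dots> = ext_el phi b (\<Sum>j<c. phi (w $ j) * A $$ (p div m, j)) $ (p mod m)"
    using p_mod by (simp add: ext_el_sum_nth ext_el_smult mult.commute)
  also have "(\<Sum>j<c. phi (w $ j) * A $$ (p div m, j)) = (A *\<^sub>v map_vec phi w) $ (p div m)"
    using A w p_div by (auto simp: scalar_prod_def lessThan_atLeast0 mult.commute)
  finally show ?thesis .
qed

lemma ext_mat_mult_vec_eq_0_iff: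
  assumes A: "A \<in> carrier_mat a c" and w: "w \<in> carrier_vec c"
  shows "ext_mat phi b A *\<^sub>v w = 0\<^sub>v (a * m) \<longleftrightarrow> A *\<^sub>v map_vec phi w = 0\<^sub>v a"
proof
  assume ext_zero: "ext_mat phi b A *\<^sub>v w = 0\<^sub>v (a * m)"
  show "A *\<^sub>v map_vec phi w = 0\<^sub>v a"
  proof (rule eq_vecI)
    fix i assume "i < dim_vec (0\<^sub>v a :: 'Q vec)"
    then have i: "i < a" by simp
    have "ext_el phi b ((A *\<^sub>v map_vec phi w) $ i) = 0\<^sub>v m"
    proof (rule eq_vecI)
      fix l assume "l < dim_vec (0\<^sub>v m :: 'q vec)"
      then have l: "l < m" by simp
      have "i * m + l < (i + 1) * m" using l by simp
      also have "\<dots> \<le> a * m" using i by (intro mult_right_mono) auto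
      finally have p: "i * m + l < a * m" .
      then show "ext_el phi b ((A *\<^sub>v map_vec phi w) $ i) $ l = 0\<^sub>v m $ l"
        using ext_mat_mult_vec_nth[OF A w p] ext_zero p l mult_add_div_mod[OF l] by simp
    qed simp
    then show "(A *\<^sub>v map_vec phi w) $ i = 0\<^sub>v a $ i" using ext_el_eq_0_imp i by simp
  qed (use A in simp)
next
  assume "A *\<^sub>v map_vec phi w = 0\<^sub>v a"
  then show "ext_mat phi b A *\<^sub>v w = 0\<^sub>v (a * m)"
    using ext_mat_mult_vec_nth[OF A w] A
    by (intro eq_vecI) (auto simp: ext_el_zero less_mult_imp_div_less dim_basis_pos ext_mat_def)
qed

lemma mat_kernel_ext_mat:
  assumes A: "A \<in> carrier_mat a c"
  shows "mat_kernel (ext_mat phi b A) = {w \<in> carrier_vec c. A *\<^sub>v map_vec phi w = 0\<^sub>v a}"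
  using ext_mat_mult_vec_eq_0_iff[OF A] A unfolding mat_kernel_def by (auto simp: ext_mat_def)

text \<open>Row l of ext(M^T z) is the combination of the rows of ext(M) with coefficients in row l of
  this matrix, obtained by expanding each z_r M_rx with ext_el_mult_nth.\<close>

definition ext_comb_mat :: "'Q vec \<Rightarrow> 'q mat" where
  "ext_comb_mat z = mat m (dim_vec z * m) (\<lambda>(l, p). ext_el phi b (z $ (p div m) * b $ (p mod m)) $ l)"

lemma dim_row_ext_comb_mat [simp]: "dim_row (ext_comb_mat z) = m"
  unfolding ext_comb_mat_def by simp

lemma ext_comb_mat_carrier: "z \<in> carrier_vec s \<Longrightarrow> ext_comb_mat z \<in> carrier_mat m (s * m)"
  unfolding ext_comb_mat_def by simp

lemma ext_mat_row_comb:
  assumes M: "M \<in> carrier_mat s nj" and z: "z \<in> carrier_vec s"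
  shows "ext_mat phi b (mat_of_row (M\<^sup>T *\<^sub>v z)) = ext_comb_mat z * ext_mat phi b M"
proof (rule eq_matI)
  fix l x assume "l < dim_row (ext_comb_mat z * ext_mat phi b M)" "x < dim_col (ext_comb_mat z * ext_mat phi b M)"
  then have l: "l < m" and x: "x < nj" using M by (auto simp: ext_mat_def ext_comb_mat_def)
  have "ext_mat phi b (mat_of_row (M\<^sup>T *\<^sub>v z)) $$ (l, x) = ext_el phi b (\<Sum>r<s. z $ r * M $$ (r, x)) $ l"
    using M z l x by (simp add: ext_mat_of_row_index scalar_prod_def lessThan_atLeast0 mult.commute)
  also have "\<dots> = (\<Sum>r<s. ext_el phi b (z $ r * M $$ (r, x)) $ l)"
    by (rule ext_el_sum_nth[OF finite_lessThan l])
  also have "\<dots> = (\<Sum>r<s. \<Sum>l'<m. ext_el phi b (z $ r * b $ l') $ l * ext_el phi b (M $$ (r, x)) $ l')"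
    by (rule sum.cong[OF refl], rule ext_el_mult_nth[OF l])
  also have "\<dots> = (\<Sum>p<s * m. ext_el phi b (z $ (p div m) * b $ (p mod m)) $ l
      * ext_el phi b (M $$ (p div m, x)) $ (p mod m))"
    by (subst sum_lessThan_mult_split) (auto intro!: sum.cong simp: mult_add_div_mod)
  also have "\<dots> = (ext_comb_mat z * ext_mat phi b M) $$ (l, x)"
    using M z l x by (simp add: ext_comb_mat_def ext_mat_def scalar_prod_def lessThan_atLeast0)
  finally show "ext_mat phi b (mat_of_row (M\<^sup>T *\<^sub>v z)) $$ (l, x) = (ext_comb_mat z * ext_mat phi b M) $$ (l, x)" .
qed (use M z in \<open>auto simp: ext_mat_def ext_comb_mat_def\<close>)

lemma rk_q_row_comb_le:
  assumes M: "M \<in> carrier_mat s nj" and z: "z \<in> carrier_vec s"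
  shows "rk_q phi b (mat_of_row (M\<^sup>T *\<^sub>v z)) \<le> rk_q phi b M"
proof -
  have G: "ext_mat phi b M \<in> carrier_mat (s * m) nj" using M by (simp add: ext_mat_def)
  have "vec_space.rank m (ext_comb_mat z * ext_mat phi b M) \<le> vec_space.rank (s * m) (ext_mat phi b M)"
    by (rule rank_mult_left_le[OF ext_comb_mat_carrier[OF z] G])
  then show ?thesis unfolding rk_q_def ext_mat_row_comb[OF M z] using M by simp
qed

lemma rk_q_add_phi_row_le:
  assumes w: "w \<in> carrier_vec nj" and v: "v \<in> carrier_vec nj"
  shows "rk_q phi b (mat_of_row (map_vec phi w + v)) \<le> rk_q phi b (mat_of_row v) + 1"
proof -
  interpret V: vec_space "TYPE('q)" m .
  let ?A = "ext_mat phi b (mat_of_row (map_vec phi w))" and ?B = "ext_mat phi b (mat_of_row v)"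
  have A: "?A \<in> carrier_mat m nj" and B: "?B \<in> carrier_mat m nj" using w v by (auto simp: ext_mat_def)
  have "ext_mat phi b (mat_of_row (map_vec phi w + v)) = ?A + ?B"
    using w v by (intro eq_matI) (auto simp: ext_mat_of_row_index ext_el_add ext_mat_def)
  then have "rk_q phi b (mat_of_row (map_vec phi w + v)) \<le> V.rank ?A + V.rank ?B"
    unfolding rk_q_def using V.rank_subadditive[OF A B] w v by (simp add: ext_mat_def)
  moreover have "V.rank ?A \<le> 1"
    using w by (intro V.rank_le_1_product_entries[OF A, of "\<lambda>l. ext_el phi b 1 $ l" "\<lambda>x. w $ x"])
      (simp add: ext_mat_of_row_index ext_el_phi_nth mult.commute ext_mat_def)
  ultimately show ?thesis unfolding rk_q_def using v by (simp add: ext_mat_def)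
qed

text \<open>Only this inclusion holds in general: for M = (1 \<alpha>) with \<alpha> outside F_q, the F_q-row space
  of ext(M) is all of F_q^2, while only 0 is mapped into the F_(q^m)-row space of M.\<close>

lemma phi_row_space_imp_row_space_q:
  assumes M: "M \<in> carrier_mat s nj" and w: "w \<in> carrier_vec nj" and z: "z \<in> carrier_vec s"
    and comb: "map_vec phi w = M\<^sup>T *\<^sub>v z"
  shows "w \<in> row_space_q phi b M"
proof -
  let ?G = "ext_mat phi b M" and ?\<Omega> = "ext_comb_mat z"
  obtain l0 where l0: "l0 < m" "ext_el phi b 1 $ l0 \<noteq> 0" using ext_el_one_nonzero by blast
  define \<kappa> where "\<kappa> = ext_el phi b 1 $ l0"
  have G: "?G \<in> carrier_mat (s * m) nj" using M by (simp add: ext_mat_def)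
  have \<Omega>: "?\<Omega> \<in> carrier_mat m (s * m)" using z by (rule ext_comb_mat_carrier)
  have kw: "\<kappa> \<cdot>\<^sub>v w = ?G\<^sup>T *\<^sub>v row ?\<Omega> l0"
  proof (rule eq_vecI)
    fix x assume "x < dim_vec (?G\<^sup>T *\<^sub>v row ?\<Omega> l0)"
    then have x: "x < nj" using M by simp
    have "\<kappa> * w $ x = ext_mat phi b (mat_of_row (map_vec phi w)) $$ (l0, x)"
      using w x l0 by (simp add: ext_mat_of_row_index ext_el_phi_nth \<kappa>_def mult.commute)
    also have "\<dots> = (?\<Omega> * ?G) $$ (l0, x)" unfolding comb ext_mat_row_comb[OF M z] ..
    also have "\<dots> = row ?\<Omega> l0 \<bullet> col ?G x" using M x l0 by simp
    also have "\<dots> = col ?G x \<bullet> row ?\<Omega> l0" by (rule comm_scalar_prod[of _ "s * m"]) (use G \<Omega> x l0 in auto)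
    also have "\<dots> = (?G\<^sup>T *\<^sub>v row ?\<Omega> l0) $ x" using carrier_matD[OF G] x by simp
    finally show "(\<kappa> \<cdot>\<^sub>v w) $ x = (?G\<^sup>T *\<^sub>v row ?\<Omega> l0) $ x" using w x by simp
  qed (use w M in simp)
  have "?G\<^sup>T *\<^sub>v ((1 / \<kappa>) \<cdot>\<^sub>v row ?\<Omega> l0) = (1 / \<kappa>) \<cdot>\<^sub>v (\<kappa> \<cdot>\<^sub>v w)"
    unfolding kw using G \<Omega> l0 by (simp add: mult_mat_vec)
  also have "\<dots> = w" using l0 unfolding \<kappa>_def by (simp add: smult_smult_assoc)
  finally have "?G\<^sup>T *\<^sub>v ((1 / \<kappa>) \<cdot>\<^sub>v row ?\<Omega> l0) = w" .
  moreover have "(1 / \<kappa>) \<cdot>\<^sub>v row ?\<Omega> l0 \<in> carrier_vec (s * m)" using \<Omega> l0 by simp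
  moreover have "row_space_q phi b M = {v \<in> carrier_vec nj. \<exists>y \<in> carrier_vec (s * m). ?G\<^sup>T *\<^sub>v y = v}"
    unfolding row_space_q_def using vec_space.row_space_eq[OF G] carrier_matD[OF M] by simp
  ultimately show ?thesis using w by blast
qed

text \<open>Expand each entry of M in the basis b and push phi through the product B * X.\<close>

lemma ext_mat_transpose_factor_lift:
  assumes M: "M \<in> carrier_mat s nj" and B: "B \<in> carrier_mat nj r" and X: "X \<in> carrier_mat r (s * m)"
    and factor: "(ext_mat phi b M)\<^sup>T = B * X"
  shows "M\<^sup>T = map_mat phi B * mat r s (\<lambda>(a, r0). \<Sum>l<m. phi (X $$ (a, r0 * m + l)) * b $ l)"
proof (rule eq_matI)
  fix x r0 assume "x < dim_row (map_mat phi B * mat r s (\<lambda>(a, r0). \<Sum>l<m. phi (X $$ (a, r0 * m + l)) * b $ l))"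
    "r0 < dim_col (map_mat phi B * mat r s (\<lambda>(a, r0). \<Sum>l<m. phi (X $$ (a, r0 * m + l)) * b $ l))"
  then have x: "x < nj" and r0: "r0 < s" using B by auto
  have entry: "ext_el phi b (M $$ (r0, x)) $ l = (\<Sum>a<r. B $$ (x, a) * X $$ (a, r0 * m + l))" if l: "l < m" for l
  proof -
    have "r0 * m + l < (r0 + 1) * m" using l by simp
    also have "\<dots> \<le> s * m" using r0 by (intro mult_right_mono) auto
    finally have p: "r0 * m + l < s * m" .
    have "ext_el phi b (M $$ (r0, x)) $ l = (ext_mat phi b M)\<^sup>T $$ (x, r0 * m + l)"
      using M x p mult_add_div_mod[OF l, of r0] by (simp add: ext_mat_def)
    also have "\<dots> = (\<Sum>a<r. B $$ (x, a) * X $$ (a, r0 * m + l))"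
      unfolding factor using B X x p by (simp add: scalar_prod_def lessThan_atLeast0)
    finally show ?thesis .
  qed
  have "M\<^sup>T $$ (x, r0) = (\<Sum>l<m. phi (ext_el phi b (M $$ (r0, x)) $ l) * b $ l)"
    using M x r0 ext_el_lin_comb[of "M $$ (r0, x)"] by (simp add: lin_comb_def)
  also have "\<dots> = (\<Sum>l<m. \<Sum>a<r. phi (B $$ (x, a)) * (phi (X $$ (a, r0 * m + l)) * b $ l))"
    using entry by (simp add: hom_sum phi_mult sum_distrib_right mult.assoc)
  also have "\<dots> = (\<Sum>a<r. phi (B $$ (x, a)) * (\<Sum>l<m. phi (X $$ (a, r0 * m + l)) * b $ l))"
    by (subst sum.swap) (simp add: sum_distrib_left)
  also have "\<dots> = (map_mat phi B * mat r s (\<lambda>(a, r0). \<Sum>l<m. phi (X $$ (a, r0 * m + l)) * b $ l)) $$ (x, r0)"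
    using B x r0 by (simp add: scalar_prod_def lessThan_atLeast0)
  finally show "M\<^sup>T $$ (x, r0) = (map_mat phi B * mat r s (\<lambda>(a, r0). \<Sum>l<m. phi (X $$ (a, r0 * m + l)) * b $ l)) $$ (x, r0)" .
qed (use M B in auto)

lemma ext_mat_rank_factorization:
  assumes M: "M \<in> carrier_mat s nj"
  shows "\<exists>B X W. B \<in> carrier_mat nj (rk_q phi b M) \<and> X \<in> carrier_mat (rk_q phi b M) (s * m)
    \<and> W \<in> carrier_mat (rk_q phi b M) s \<and> (ext_mat phi b M)\<^sup>T = B * X \<and> M\<^sup>T = map_mat phi B * W"
proof -
  have G: "ext_mat phi b M \<in> carrier_mat (s * m) nj" using M by (simp add: ext_mat_def)
  then have "vec_space.rank nj (ext_mat phi b M)\<^sup>T = rk_q phi b M"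
    unfolding rk_q_def using rank_transpose[OF G] M by simp
  then obtain B X where "B \<in> carrier_mat nj (rk_q phi b M)" "X \<in> carrier_mat (rk_q phi b M) (s * m)"
    "(ext_mat phi b M)\<^sup>T = B * X"
    using rank_factorization[of "(ext_mat phi b M)\<^sup>T" nj "s * m"] G by auto
  then show ?thesis using ext_mat_transpose_factor_lift[OF M] by (intro exI conjI) auto
qed

lemma row_space_q_carrier: "row_space_q phi b M \<subseteq> carrier_vec (dim_col M)"
proof -
  have G: "ext_mat phi b M \<in> carrier_mat (dim_row M * m) (dim_col M)" by (rule carrier_matI) simp_all
  show ?thesis unfolding row_space_q_def using vec_space.row_space_eq[OF G] by auto
qed

lemma sr_weight_blk_embed_add_le:
  assumes E: "E \<in> carrier_mat s (sum_list ns)" and i: "i < length ns"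
    and w: "w \<in> carrier_vec (ns ! i)" and z: "z \<in> carrier_vec s"
  shows "sr_weight phi b ns (mat_of_row (blk_embed ns i (map_vec phi w) + E\<^sup>T *\<^sub>v z))
    \<le> sr_weight phi b ns E + 1"
proof -
  let ?c = "blk_embed ns i (map_vec phi w) + E\<^sup>T *\<^sub>v z"
  have c: "?c \<in> carrier_vec (sum_list ns)" using E z by simp
  have "rk_q phi b (blk ns (mat_of_row ?c) j) \<le> rk_q phi b (blk ns E j) + (if j = i then 1 else 0)"
    if j: "j < length ns" for j
  proof -
    have Ej: "blk ns E j \<in> carrier_mat s (ns ! j)" using E by (simp add: blk_def)
    have comb: "(blk ns E j)\<^sup>T *\<^sub>v z \<in> carrier_vec (ns ! j)" using Ej z by simp
    have Ez: "E\<^sup>T *\<^sub>v z \<in> carrier_vec (sum_list ns)" using E z by simp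
    have "blk_vec ns j ?c = (if j = i then map_vec phi w else 0\<^sub>v (ns ! j)) + (blk ns E j)\<^sup>T *\<^sub>v z"
      unfolding blk_vec_add[OF blk_embed_carrier Ez j] blk_vec_transpose_mult[OF E j z]
      using blk_vec_blk_embed[OF i j, of "map_vec phi w"] w by simp
    then have row_c: "blk ns (mat_of_row ?c) j
        = mat_of_row ((if j = i then map_vec phi w else 0\<^sub>v (ns ! j)) + (blk ns E j)\<^sup>T *\<^sub>v z)"
      using blk_mat_of_row[OF c j] by simp
    show ?thesis
    proof (cases "j = i")
      case True
      have "rk_q phi b (mat_of_row (map_vec phi w + (blk ns E j)\<^sup>T *\<^sub>v z))
          \<le> rk_q phi b (mat_of_row ((blk ns E j)\<^sup>T *\<^sub>v z)) + 1"
        using rk_q_add_phi_row_le[OF _ comb] w True by simp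
      also have "\<dots> \<le> rk_q phi b (blk ns E j) + 1" using rk_q_row_comb_le[OF Ej z] by simp
      finally show ?thesis using row_c True by simp
    next
      case False
      then show ?thesis using row_c rk_q_row_comb_le[OF Ej z] comb by simp
    qed
  qed
  then have "sr_weight phi b ns (mat_of_row ?c)
      \<le> (\<Sum>j<length ns. rk_q phi b (blk ns E j) + (if j = i then 1 else 0))"
    unfolding sr_weight_def by (intro sum_mono) simp
  also have "\<dots> = sr_weight phi b ns E + 1" using i by (simp add: sr_weight_def sum.distrib)
  finally show ?thesis .
qed

text \<open>The codeword (w placed in block i) - E^T z has sum-rank weight at most wt(E) + 1 < d,
  so it vanishes.\<close>

lemma row_space_q_blk_if_congruent:
  assumes H: "H \<in> carrier_mat N (sum_list ns)" and E: "E \<in> carrier_mat s (sum_list ns)"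
    and dist: "enat (sr_weight phi b ns E) + 2 \<le> sr_min_dist phi b ns (mat_kernel H)"
    and i: "i < length ns" and w: "w \<in> carrier_vec (ns ! i)" and z: "z \<in> carrier_vec s"
    and congr: "H *\<^sub>v (blk_embed ns i (map_vec phi w) - E\<^sup>T *\<^sub>v z) = 0\<^sub>v N"
  shows "w \<in> row_space_q phi b (blk ns E i)"
proof -
  let ?x = "blk_embed ns i (map_vec phi w)"
  have Ez: "E\<^sup>T *\<^sub>v z \<in> carrier_vec (sum_list ns)" using E z by simp
  have zero: "?x - E\<^sup>T *\<^sub>v z = 0\<^sub>v (sum_list ns)"
  proof (rule ccontr)
    assume nonzero: "?x - E\<^sup>T *\<^sub>v z \<noteq> 0\<^sub>v (sum_list ns)"
    have "?x - E\<^sup>T *\<^sub>v z \<in> mat_kernel H" using mat_kernelI[OF H _ congr] Ez by simp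
    moreover have "0\<^sub>v (sum_list ns) \<in> mat_kernel H" using mat_kernelI[OF H] H by simp
    ultimately have "sr_min_dist phi b ns (mat_kernel H) \<le> enat (sr_weight phi b ns (mat_of_row (?x - E\<^sup>T *\<^sub>v z)))"
      using nonzero Ez carrier_matD[OF E] by (intro sr_min_dist_le_sr_weight) simp_all
    also have "?x - E\<^sup>T *\<^sub>v z = ?x + E\<^sup>T *\<^sub>v (- z)"
      using E z Ez by (simp add: minus_add_uminus_vec[of _ "sum_list ns"] mult_mat_vec_uminus_right)
    also have "sr_weight phi b ns (mat_of_row \<dots>) \<le> sr_weight phi b ns E + 1"
      using sr_weight_blk_embed_add_le[OF E i w] z by simp
    finally have "sr_min_dist phi b ns (mat_kernel H) \<le> enat (sr_weight phi b ns E + 1)" by simp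
    from order_trans[OF dist this] show False by (simp add: numeral_eq_enat)
  qed
  have "?x = E\<^sup>T *\<^sub>v z"
  proof (rule eq_vecI)
    fix a assume "a < dim_vec (E\<^sup>T *\<^sub>v z)"
    then show "?x $ a = (E\<^sup>T *\<^sub>v z) $ a" using arg_cong[OF zero, of "\<lambda>v. v $ a"] carrier_matD[OF E] by simp
  qed (use carrier_matD[OF E] in simp)
  then have "map_vec phi w = (blk ns E i)\<^sup>T *\<^sub>v z"
    using blk_vec_blk_embed[OF i i, of "map_vec phi w"] blk_vec_transpose_mult[OF E i z] w by simp
  then show ?thesis
    using phi_row_space_imp_row_space_q[OF _ w z] E by (simp add: blk_def)
qed

lemma blk_row_space_q_subset_row_space:
  assumes E: "E \<in> carrier_mat s (sum_list ns)" and rank: "rk E = sr_weight phi b ns E"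
    and i: "i < length ns" and w: "w \<in> row_space_q phi b (blk ns E i)"
  shows "\<exists>z \<in> carrier_vec s. blk_embed ns i (map_vec phi w) = E\<^sup>T *\<^sub>v z"
proof -
  let ?r = "\<lambda>j. rk_q phi b (blk ns E j)"
  have Ej: "blk ns E j \<in> carrier_mat s (ns ! j)" for j using E by (simp add: blk_def)
  have "\<forall>j. \<exists>B X W. B \<in> carrier_mat (ns ! j) (?r j) \<and> X \<in> carrier_mat (?r j) (s * m)
      \<and> W \<in> carrier_mat (?r j) s \<and> (ext_mat phi b (blk ns E j))\<^sup>T = B * X
      \<and> (blk ns E j)\<^sup>T = map_mat phi B * W"
    using ext_mat_rank_factorization[OF Ej] by blast
  then obtain B X W where B: "\<And>j. B j \<in> carrier_mat (ns ! j) (?r j)"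
    and X: "\<And>j. X j \<in> carrier_mat (?r j) (s * m)" and W: "\<And>j. W j \<in> carrier_mat (?r j) s"
    and ext_factor: "\<And>j. (ext_mat phi b (blk ns E j))\<^sup>T = B j * X j"
    and factor: "\<And>j. (blk ns E j)\<^sup>T = map_mat phi (B j) * W j"
    by metis
  have G: "ext_mat phi b (blk ns E i) \<in> carrier_mat (s * m) (ns ! i)" using Ej[of i] by (simp add: ext_mat_def)
  have "row_space_q phi b (blk ns E i)
      = {v \<in> carrier_vec (ns ! i). \<exists>y \<in> carrier_vec (s * m). (ext_mat phi b (blk ns E i))\<^sup>T *\<^sub>v y = v}"
    unfolding row_space_q_def using vec_space.row_space_eq[OF G] carrier_matD[OF Ej[of i]] by simp
  then obtain y where y: "y \<in> carrier_vec (s * m)" and wy: "(ext_mat phi b (blk ns E i))\<^sup>T *\<^sub>v y = w"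
    using w by blast
  have Xy: "X i *\<^sub>v y \<in> carrier_vec (?r i)" using X[of i] y by simp
  have "map_vec phi w = map_mat phi (B i) *\<^sub>v map_vec phi (X i *\<^sub>v y)"
    using wy ext_factor[of i] B[of i] X[of i] y mult_mat_vec_hom[OF B[of i] Xy] by simp
  moreover have "rk E = (\<Sum>j<length ns. ?r j)" using rank unfolding sr_weight_def .
  ultimately show ?thesis
    using blk_factors_in_row_space[OF E _ _ W factor i, of "map_vec phi (X i *\<^sub>v y)"] B Xy by auto
qed

lemma mat_kernel_ext_blk_rows_sub_iff:
  fixes H B P :: "'Q mat"
  assumes H: "H \<in> carrier_mat N (sum_list ns)" and B: "B \<in> carrier_mat (sum_list ns) s"
    and P: "P \<in> carrier_mat N N" and inv: "invertible_mat P" and ref: "is_ref (P * (H * B))"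
    and i: "i < length ns"
  shows "w \<in> mat_kernel (ext_mat phi b (blk ns (rows_sub (P * H) (zero_rows (P * (H * B)))) i))
    \<longleftrightarrow> w \<in> carrier_vec (ns ! i)
      \<and> (\<exists>z \<in> carrier_vec s. H *\<^sub>v (blk_embed ns i (map_vec phi w) - B *\<^sub>v z) = 0\<^sub>v N)"
proof -
  let ?Z = "zero_rows (P * (H * B))"
  let ?Hs = "rows_sub (P * H) ?Z"
  have Hs: "?Hs \<in> carrier_mat (card ?Z) (sum_list ns)" using H by (simp add: rows_sub_def)
  have Hs_i: "blk ns ?Hs i \<in> carrier_mat (card ?Z) (ns ! i)"
    unfolding blk_def using carrier_matD[OF Hs] by simp
  have "w \<in> mat_kernel (ext_mat phi b (blk ns ?Hs i))
      \<longleftrightarrow> w \<in> carrier_vec (ns ! i) \<and> ?Hs *\<^sub>v blk_embed ns i (map_vec phi w) = 0\<^sub>v (card ?Z)"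
    unfolding mat_kernel_ext_mat[OF Hs_i] using mult_blk_embed[OF Hs i] by auto
  also have "\<dots> \<longleftrightarrow> w \<in> carrier_vec (ns ! i)
      \<and> (\<exists>z \<in> carrier_vec s. H *\<^sub>v (blk_embed ns i (map_vec phi w) - B *\<^sub>v z) = 0\<^sub>v N)"
    using rows_sub_zero_rows_kernel_iff[OF H B P inv ref blk_embed_carrier] by simp
  finally show ?thesis .
qed

end

theorem theorem1:
  fixes phi :: "'q::{finite,field} \<Rightarrow> 'Q::{finite,field}"
    and b :: "'Q vec"
    and ns :: "nat list"
    and n k s t :: nat
    and H E P :: "'Q mat"
  assumes emb: "is_embedding phi"
    and basis: "is_basis phi b"
    and m_pos: "dim_vec b \<ge> 1"
    and s_pos: "s \<ge> 1"
    and ns_pos: "\<forall>i < length ns. ns ! i > 0"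
    and n_def: "n = sum_list ns"
    and k_le: "k \<le> n"
    and H_dim: "H \<in> carrier_mat (n - k) n"
    and H_rank: "rk H = n - k"
    and t_le: "enat t + 2 \<le> sr_min_dist phi b ns (mat_kernel H)"
    and E_dim: "E \<in> carrier_mat s n"
    and t_def: "t = sr_weight phi b ns E"
    and P_dim: "P \<in> carrier_mat (n - k) (n - k)"
    and P_inv: "invertible_mat P"
    and P_ref: "is_ref (P * (H * E\<^sup>T))"
    and s_ge: "s \<ge> t"
    and E_rank: "rk E = t"
  shows "\<forall>i < length ns.
     row_space_q phi b (blk ns E i)
       = mat_kernel (ext_mat phi b (blk ns (rows_sub (P * H) (zero_rows (P * (H * E\<^sup>T)))) i))"
proof (intro allI impI)
  fix i assume i: "i < length ns"
  interpret ext_basis phi b using emb basis by unfold_locales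
  let ?Hs = "rows_sub (P * H) (zero_rows (P * (H * E\<^sup>T)))"
  have H: "H \<in> carrier_mat (n - k) (sum_list ns)" and E: "E \<in> carrier_mat s (sum_list ns)"
    using H_dim E_dim n_def by simp_all
  have ET: "E\<^sup>T \<in> carrier_mat (sum_list ns) s" using E by simp
  note kernel_iff = mat_kernel_ext_blk_rows_sub_iff[OF H ET P_dim P_inv P_ref i]
  show "row_space_q phi b (blk ns E i) = mat_kernel (ext_mat phi b (blk ns ?Hs i))"
  proof (intro equalityI subsetI)
    fix w assume w: "w \<in> row_space_q phi b (blk ns E i)"
    then obtain z where z: "z \<in> carrier_vec s" and comb: "blk_embed ns i (map_vec phi w) = E\<^sup>T *\<^sub>v z"
      using blk_row_space_q_subset_row_space[OF E _ i] E_rank t_def by metis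
    have "E\<^sup>T *\<^sub>v z \<in> carrier_vec (sum_list ns)" using E z by simp
    then have "H *\<^sub>v (blk_embed ns i (map_vec phi w) - E\<^sup>T *\<^sub>v z) = 0\<^sub>v (n - k)"
      unfolding comb using H by simp
    moreover have "w \<in> carrier_vec (ns ! i)" using w row_space_q_carrier by (force simp: blk_def)
    ultimately show "w \<in> mat_kernel (ext_mat phi b (blk ns ?Hs i))"
      unfolding kernel_iff[of w] using z by blast
  next
    fix w assume "w \<in> mat_kernel (ext_mat phi b (blk ns ?Hs i))"
    then show "w \<in> row_space_q phi b (blk ns E i)"
      unfolding kernel_iff[of w] using row_space_q_blk_if_congruent[OF H E _ i] t_le t_def by blast
  qed
qed

end
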